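(* Suppose that $\xi,\eta:G_+\rightarrow G_-$ are two group homomorphisms, and that $r:G_+\times G_+\rightarrow \mathbf{R}^{>0}$ is a function such that for all $u,v,w\in G_+$: $$\,^v\xi(u) = \xi(^{\eta(v)}u),\qquad \eta(v)^u = \eta(v^{\xi(u)}),$$ $$r(uw,v) = r(u,v)\,r(w,v^{\xi(u)}),\qquad r(u,wv) = r(u,v)\,r(^{\eta(v)}u,w).$$ Then $$R=\sum_{u,v\in G_+}r(u,v)\,\{u\left(\eta(v)^{u}\right)^{-1}\}\otimes \{v\xi(u)\}\in H(G;G_+,G_-)\otimes H(G;G_+,G_-)$$ satisfies $(\Delta \otimes id)R = R_{13}R_{23}$ and $(id \otimes \Delta) R = R_{13}R_{12}$. Conversely, if $R\in H(G;G_+,G_-)\otimes H(G;G_+,G_-)$ is invertible, positive, satisfies $(\Delta \otimes id)R = R_{13}R_{23}$ and $(id \otimes \Delta) R = R_{13}R_{12}$, and $R^{-1}$ is also positive, then there exist group homomorphisms $\xi,\eta:G_+\to G_-$ and a function $r:G_+\times G_+\to\mathbf{R}^{>0}$ satisfying the four identities above such that $R=\sum_{u,v\in G_+}r(u,v)\,\{u\left(\eta(v)^{u}\right)^{-1}\}\otimes \{v\xi(u)\}$.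
   Context: $G$ is a finite group with a unique factorization $G=G_+G_-$ (subgroups $G_+,G_-$ such that every $g\in G$ is uniquely $g=g_+g_-$ with $g_\pm\in G_\pm$; also uniquely $g=\bar g_-\bar g_+$). The induced mutual actions are defined by $g_+g_-=\left(^{g_+}g_-\right)\left(g_+^{\,g_-}\right)$ and $g_-g_+=\left(^{g_-}g_+\right)\left(g_-^{\,g_+}\right)$ (left/right actions of $G_+$ and $G_-$ on each other). $H(G;G_+,G_-)$ is the Hopf algebra with basis $\{g\}$, $g\in G$, multiplication $\{g\}\{h\}=\delta_{g_+^{g_-},h_+}\{gh_-\}$, unit $1=\sum_{g_+\in G_+}\{g_+\}$, comultiplication $\Delta\{g\}=\sum_{h_+\in G_+}\{g_+h_+^{-1}(^{h_+}g_-)\}\otimes\{h_+g_-\}$, counit $\epsilon\{g\}=\delta_{g_+,e}$, antipode $S\{g\}=\{g^{-1}\}$. An element of $H\otimes H$ is positive if it is a non-negative linear combination of the $\{g\}\otimes\{h\}$. *)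

theory Defs
  imports "HOL-Algebra.Algebra"
begin

definition unique_factorization :: "'a monoid \<Rightarrow> 'a set \<Rightarrow> 'a set \<Rightarrow> bool" where
  "unique_factorization G Gp Gm \<longleftrightarrow>
     group G \<and> finite (carrier G) \<and> subgroup Gp G \<and> subgroup Gm G \<and>
     (\<forall>g\<in>carrier G. \<exists>!p. fst p \<in> Gp \<and> snd p \<in> Gm \<and> g = fst p \<otimes>\<^bsub>G\<^esub> snd p) \<and>
     (\<forall>g\<in>carrier G. \<exists>!p. fst p \<in> Gm \<and> snd p \<in> Gp \<and> g = fst p \<otimes>\<^bsub>G\<^esub> snd p)"

definition fplus :: "'a monoid \<Rightarrow> 'a set \<Rightarrow> 'a set \<Rightarrow> 'a \<Rightarrow> 'a" where
  "fplus G Gp Gm g = (THE a. a \<in> Gp \<and> (\<exists>b\<in>Gm. g = a \<otimes>\<^bsub>G\<^esub> b))"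
definition fminus :: "'a monoid \<Rightarrow> 'a set \<Rightarrow> 'a set \<Rightarrow> 'a \<Rightarrow> 'a" where
  "fminus G Gp Gm g = (THE b. b \<in> Gm \<and> (\<exists>a\<in>Gp. g = a \<otimes>\<^bsub>G\<^esub> b))"

definition bminus :: "'a monoid \<Rightarrow> 'a set \<Rightarrow> 'a set \<Rightarrow> 'a \<Rightarrow> 'a" where
  "bminus G Gp Gm g = (THE b. b \<in> Gm \<and> (\<exists>a\<in>Gp. g = b \<otimes>\<^bsub>G\<^esub> a))"
definition bplus :: "'a monoid \<Rightarrow> 'a set \<Rightarrow> 'a set \<Rightarrow> 'a \<Rightarrow> 'a" where
  "bplus G Gp Gm g = (THE a. a \<in> Gp \<and> (\<exists>b\<in>Gm. g = b \<otimes>\<^bsub>G\<^esub> a))"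

text \<open>Mutual actions. For a in G+, b in G-:
  a b = (^a b)(a^b)  with ^a b in G-, a^b in G+;
  b a = (^b a)(b^a)  with ^b a in G+, b^a in G-.\<close>
definition lact_pm :: "'a monoid \<Rightarrow> 'a set \<Rightarrow> 'a set \<Rightarrow> 'a \<Rightarrow> 'a \<Rightarrow> 'a" where
  "lact_pm G Gp Gm a b = bminus G Gp Gm (a \<otimes>\<^bsub>G\<^esub> b)"
definition ract_pm :: "'a monoid \<Rightarrow> 'a set \<Rightarrow> 'a set \<Rightarrow> 'a \<Rightarrow> 'a \<Rightarrow> 'a" where
  "ract_pm G Gp Gm a b = bplus G Gp Gm (a \<otimes>\<^bsub>G\<^esub> b)"
definition lact_mp :: "'a monoid \<Rightarrow> 'a set \<Rightarrow> 'a set \<Rightarrow> 'a \<Rightarrow> 'a \<Rightarrow> 'a" where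
  "lact_mp G Gp Gm b a = fplus G Gp Gm (b \<otimes>\<^bsub>G\<^esub> a)"
definition ract_mp :: "'a monoid \<Rightarrow> 'a set \<Rightarrow> 'a set \<Rightarrow> 'a \<Rightarrow> 'a \<Rightarrow> 'a" where
  "ract_mp G Gp Gm b a = fminus G Gp Gm (b \<otimes>\<^bsub>G\<^esub> a)"

text \<open>Elements of H are coefficient functions on carrier G; elements of H (x) H and
  H (x) H (x) H are coefficient functions of 2 resp. 3 arguments.\<close>

text \<open>Structure constant: coefficient of {k} in {g}{h}.\<close>
definition hmc :: "'a monoid \<Rightarrow> 'a set \<Rightarrow> 'a set \<Rightarrow> 'a \<Rightarrow> 'a \<Rightarrow> 'a \<Rightarrow> real" where
  "hmc G Gp Gm g h k =
     (if ract_pm G Gp Gm (fplus G Gp Gm g) (fminus G Gp Gm g) = fplus G Gp Gm h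
         \<and> k = g \<otimes>\<^bsub>G\<^esub> fminus G Gp Gm h then 1 else 0)"

text \<open>Coefficient of {a} (x) {b} in Delta {g}.\<close>
definition dc :: "'a monoid \<Rightarrow> 'a set \<Rightarrow> 'a set \<Rightarrow> 'a \<Rightarrow> 'a \<Rightarrow> 'a \<Rightarrow> real" where
  "dc G Gp Gm g a b =
     (\<Sum>h\<in>Gp. if a = fplus G Gp Gm g \<otimes>\<^bsub>G\<^esub> inv\<^bsub>G\<^esub> h \<otimes>\<^bsub>G\<^esub> lact_pm G Gp Gm h (fminus G Gp Gm g)
                 \<and> b = h \<otimes>\<^bsub>G\<^esub> fminus G Gp Gm g then 1 else 0)"

definition tens2 :: "'a monoid \<Rightarrow> ('a \<Rightarrow> 'a \<Rightarrow> real) set" where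
  "tens2 G = {R. \<forall>a b. R a b \<noteq> 0 \<longrightarrow> a \<in> carrier G \<and> b \<in> carrier G}"

definition positive2 :: "('a \<Rightarrow> 'a \<Rightarrow> real) \<Rightarrow> bool" where
  "positive2 R \<longleftrightarrow> (\<forall>a b. R a b \<ge> 0)"

definition mult2 :: "'a monoid \<Rightarrow> 'a set \<Rightarrow> 'a set \<Rightarrow> ('a \<Rightarrow> 'a \<Rightarrow> real) \<Rightarrow> ('a \<Rightarrow> 'a \<Rightarrow> real) \<Rightarrow> 'a \<Rightarrow> 'a \<Rightarrow> real" where
  "mult2 G Gp Gm R S a b =
     (\<Sum>g1\<in>carrier G. \<Sum>g2\<in>carrier G. \<Sum>h1\<in>carrier G. \<Sum>h2\<in>carrier G.
        R g1 g2 * S h1 h2 * hmc G Gp Gm g1 h1 a * hmc G Gp Gm g2 h2 b)"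

definition one2 :: "'a set \<Rightarrow> 'a \<Rightarrow> 'a \<Rightarrow> real" where
  "one2 Gp a b = (if a \<in> Gp \<and> b \<in> Gp then 1 else 0)"

definition mult3 :: "'a monoid \<Rightarrow> 'a set \<Rightarrow> 'a set \<Rightarrow> ('a \<Rightarrow> 'a \<Rightarrow> 'a \<Rightarrow> real) \<Rightarrow> ('a \<Rightarrow> 'a \<Rightarrow> 'a \<Rightarrow> real) \<Rightarrow> 'a \<Rightarrow> 'a \<Rightarrow> 'a \<Rightarrow> real" where
  "mult3 G Gp Gm P Q a b c =
     (\<Sum>g1\<in>carrier G. \<Sum>g2\<in>carrier G. \<Sum>g3\<in>carrier G. \<Sum>h1\<in>carrier G. \<Sum>h2\<in>carrier G. \<Sum>h3\<in>carrier G.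
        P g1 g2 g3 * Q h1 h2 h3 * hmc G Gp Gm g1 h1 a * hmc G Gp Gm g2 h2 b * hmc G Gp Gm g3 h3 c)"

text \<open>Legs: 1 = sum of {u}, u in G+.\<close>
definition leg12 :: "'a set \<Rightarrow> ('a \<Rightarrow> 'a \<Rightarrow> real) \<Rightarrow> 'a \<Rightarrow> 'a \<Rightarrow> 'a \<Rightarrow> real" where
  "leg12 Gp R a b c = R a b * (if c \<in> Gp then 1 else 0)"
definition leg13 :: "'a set \<Rightarrow> ('a \<Rightarrow> 'a \<Rightarrow> real) \<Rightarrow> 'a \<Rightarrow> 'a \<Rightarrow> 'a \<Rightarrow> real" where
  "leg13 Gp R a b c = R a c * (if b \<in> Gp then 1 else 0)"
definition leg23 :: "'a set \<Rightarrow> ('a \<Rightarrow> 'a \<Rightarrow> real) \<Rightarrow> 'a \<Rightarrow> 'a \<Rightarrow> 'a \<Rightarrow> real" where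
  "leg23 Gp R a b c = (if a \<in> Gp then 1 else 0) * R b c"

definition delta_id :: "'a monoid \<Rightarrow> 'a set \<Rightarrow> 'a set \<Rightarrow> ('a \<Rightarrow> 'a \<Rightarrow> real) \<Rightarrow> 'a \<Rightarrow> 'a \<Rightarrow> 'a \<Rightarrow> real" where
  "delta_id G Gp Gm R a b c = (\<Sum>g\<in>carrier G. \<Sum>g'\<in>carrier G.
       R g g' * dc G Gp Gm g a b * (if c = g' then 1 else 0))"
definition id_delta :: "'a monoid \<Rightarrow> 'a set \<Rightarrow> 'a set \<Rightarrow> ('a \<Rightarrow> 'a \<Rightarrow> real) \<Rightarrow> 'a \<Rightarrow> 'a \<Rightarrow> 'a \<Rightarrow> real" where
  "id_delta G Gp Gm R a b c = (\<Sum>g'\<in>carrier G. \<Sum>g\<in>carrier G.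
       R g' g * (if a = g' then 1 else 0) * dc G Gp Gm g b c)"

definition admissible_data :: "'a monoid \<Rightarrow> 'a set \<Rightarrow> 'a set \<Rightarrow> ('a \<Rightarrow> 'a) \<Rightarrow> ('a \<Rightarrow> 'a) \<Rightarrow> ('a \<Rightarrow> 'a \<Rightarrow> real) \<Rightarrow> bool" where
  "admissible_data G Gp Gm \<xi> \<eta> r \<longleftrightarrow>
     \<xi> \<in> hom (G\<lparr>carrier := Gp\<rparr>) (G\<lparr>carrier := Gm\<rparr>) \<and>
     \<eta> \<in> hom (G\<lparr>carrier := Gp\<rparr>) (G\<lparr>carrier := Gm\<rparr>) \<and>
     (\<forall>u\<in>Gp. \<forall>v\<in>Gp. r u v > 0) \<and>
     (\<forall>u\<in>Gp. \<forall>v\<in>Gp. \<forall>w\<in>Gp.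
        lact_pm G Gp Gm v (\<xi> u) = \<xi> (lact_mp G Gp Gm (\<eta> v) u) \<and>
        ract_mp G Gp Gm (\<eta> v) u = \<eta> (ract_pm G Gp Gm v (\<xi> u)) \<and>
        r (u \<otimes>\<^bsub>G\<^esub> w) v = r u v * r w (ract_pm G Gp Gm v (\<xi> u)) \<and>
        r u (w \<otimes>\<^bsub>G\<^esub> v) = r u v * r (lact_mp G Gp Gm (\<eta> v) u) w)"

definition R_of :: "'a monoid \<Rightarrow> 'a set \<Rightarrow> 'a set \<Rightarrow> ('a \<Rightarrow> 'a) \<Rightarrow> ('a \<Rightarrow> 'a) \<Rightarrow> ('a \<Rightarrow> 'a \<Rightarrow> real) \<Rightarrow> 'a \<Rightarrow> 'a \<Rightarrow> real" where
  "R_of G Gp Gm \<xi> \<eta> r a b = (\<Sum>u\<in>Gp. \<Sum>v\<in>Gp.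
       r u v * (if a = u \<otimes>\<^bsub>G\<^esub> inv\<^bsub>G\<^esub> (ract_mp G Gp Gm (\<eta> v) u)
                   \<and> b = v \<otimes>\<^bsub>G\<^esub> \<xi> u then 1 else 0))"

end

theory Submission
  imports Defs
begin

text \<open>
  Call an element of H (x) H monomial if above each pair (u, v) of G+ x G+ it carries a
  single basis tensor, t(u,v) {u A(u,v)} (x) {v B(u,v)} with A, B valued in G-; the element
  R built from (xi, eta, r) is monomial with A(u,v) = (eta(v)^u)^-1 and B(u,v) = xi(u).
  For a monomial R, both sides of (Delta (x) id) R = R13 R23, and likewise of
  (id (x) Delta) R = R13 R12, are monomial elements of H (x) H (x) H, so comparing the
  coefficient and the three G- components above each triple of G+ turns each identity into
  four functional equations for t, A and B.  The admissibility identities imply these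
  equations.  Conversely, if R and R^-1 are positive then no cancellation can occur in
  R R^-1 = 1, and this forces R to be monomial; evaluating the functional equations at the
  unit shows that xi = B(-,1) and eta = A(1,-)^-1 are homomorphisms satisfying the four
  identities, with r = t.
\<close>

lemma sum_eq_single_support:
  assumes "\<And>x. x \<in> S \<Longrightarrow> f x \<noteq> 0 \<Longrightarrow> x = x0" "finite S" "x0 \<in> S"
  shows "sum f S = f x0"
proof -
  have "sum f S = sum f {x0}"
    using assms by (intro sum.mono_neutral_right) auto
  then show ?thesis by simp
qed

lemma (in group) mult_eq_mult_rearrange:
  assumes "x \<in> carrier G" "y \<in> carrier G" "z \<in> carrier G" "w \<in> carrier G"
    and "x \<otimes> y = z \<otimes> w"
  shows "y \<otimes> inv w = inv x \<otimes> z" and "inv z \<otimes> x = w \<otimes> inv y"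
  using assms by (metis inv_solve_left inv_solve_right m_assoc m_closed inv_closed)+

section \<open>Unique factorization and the mutual actions\<close>

locale factorized_group =
  fixes G :: "'a monoid" (structure) and Gp Gm :: "'a set"
  assumes unique_factorization: "unique_factorization G Gp Gm"

sublocale factorized_group \<subseteq> group G
  using unique_factorization unfolding unique_factorization_def by auto

context factorized_group
begin

abbreviation "fp \<equiv> fplus G Gp Gm"
abbreviation "fm \<equiv> fminus G Gp Gm"
abbreviation "bp \<equiv> bplus G Gp Gm"
abbreviation "bm \<equiv> bminus G Gp Gm"
abbreviation "lpm \<equiv> lact_pm G Gp Gm"
abbreviation "rpm \<equiv> ract_pm G Gp Gm"
abbreviation "lmp \<equiv> lact_mp G Gp Gm"
abbreviation "rmp \<equiv> ract_mp G Gp Gm"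

lemma finite_carrier: "finite (carrier G)"
  and subgroup_Gp: "subgroup Gp G"
  and subgroup_Gm: "subgroup Gm G"
  using unique_factorization unfolding unique_factorization_def by auto

lemma finite_Gp: "finite Gp"
  using finite_subset[OF subgroup.subset[OF subgroup_Gp] finite_carrier] .

lemma Gp_carrier [simp]: "x \<in> Gp \<Longrightarrow> x \<in> carrier G"
  and Gm_carrier [simp]: "x \<in> Gm \<Longrightarrow> x \<in> carrier G"
  and Gp_one [simp]: "\<one> \<in> Gp"
  and Gm_one [simp]: "\<one> \<in> Gm"
  and Gp_mult [simp]: "x \<in> Gp \<Longrightarrow> y \<in> Gp \<Longrightarrow> x \<otimes> y \<in> Gp"
  and Gm_mult [simp]: "x \<in> Gm \<Longrightarrow> y \<in> Gm \<Longrightarrow> x \<otimes> y \<in> Gm"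
  and Gp_inv [simp]: "x \<in> Gp \<Longrightarrow> inv x \<in> Gp"
  and Gm_inv [simp]: "x \<in> Gm \<Longrightarrow> inv x \<in> Gm"
  using subgroup_Gp subgroup_Gm by (auto intro: subgroup.m_closed subgroup.m_inv_closed
      subgroup.one_closed dest: subgroup.mem_carrier)

lemma factor_unique:
  assumes "a \<in> Gp" "b \<in> Gm" "a' \<in> Gp" "b' \<in> Gm" "a \<otimes> b = a' \<otimes> b'"
  shows "a = a' \<and> b = b'"
proof -
  have "\<exists>!p. fst p \<in> Gp \<and> snd p \<in> Gm \<and> a \<otimes> b = fst p \<otimes> snd p"
    using unique_factorization assms unfolding unique_factorization_def by simp
  then show ?thesis using assms by (metis fst_conv snd_conv)
qed

lemma factor_unique':
  assumes "a \<in> Gp" "b \<in> Gm" "a' \<in> Gp" "b' \<in> Gm" "b \<otimes> a = b' \<otimes> a'"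
  shows "a = a' \<and> b = b'"
proof -
  have "\<exists>!p. fst p \<in> Gm \<and> snd p \<in> Gp \<and> b \<otimes> a = fst p \<otimes> snd p"
    using unique_factorization assms unfolding unique_factorization_def by simp
  then show ?thesis using assms by (metis fst_conv snd_conv)
qed

lemma factor_exists: "g \<in> carrier G \<Longrightarrow> \<exists>a\<in>Gp. \<exists>b\<in>Gm. g = a \<otimes> b"
  and factor_exists': "g \<in> carrier G \<Longrightarrow> \<exists>a\<in>Gp. \<exists>b\<in>Gm. g = b \<otimes> a"
  using unique_factorization unfolding unique_factorization_def by (metis prod.collapse)+

lemma fplus_eq [simp]: "a \<in> Gp \<Longrightarrow> b \<in> Gm \<Longrightarrow> fp (a \<otimes> b) = a"
  and fminus_eq [simp]: "a \<in> Gp \<Longrightarrow> b \<in> Gm \<Longrightarrow> fm (a \<otimes> b) = b"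
  unfolding fplus_def fminus_def by (rule the_equality; use factor_unique in blast)+

lemma bplus_eq [simp]: "a \<in> Gp \<Longrightarrow> b \<in> Gm \<Longrightarrow> bp (b \<otimes> a) = a"
  and bminus_eq [simp]: "a \<in> Gp \<Longrightarrow> b \<in> Gm \<Longrightarrow> bm (b \<otimes> a) = b"
  unfolding bplus_def bminus_def by (rule the_equality; use factor_unique' in blast)+

lemma fplus_closed [simp]: "g \<in> carrier G \<Longrightarrow> fp g \<in> Gp"
  and fminus_closed [simp]: "g \<in> carrier G \<Longrightarrow> fm g \<in> Gm"
  and fplus_fminus: "g \<in> carrier G \<Longrightarrow> fp g \<otimes> fm g = g"
  using factor_exists by force+

lemma bplus_closed [simp]: "g \<in> carrier G \<Longrightarrow> bp g \<in> Gp"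
  and bminus_closed [simp]: "g \<in> carrier G \<Longrightarrow> bm g \<in> Gm"
  and bminus_bplus: "g \<in> carrier G \<Longrightarrow> bm g \<otimes> bp g = g"
  using factor_exists' by force+

lemma fplus_Gp [simp]: "a \<in> Gp \<Longrightarrow> fp a = a"
  and fminus_Gp [simp]: "a \<in> Gp \<Longrightarrow> fm a = \<one>"
  and bplus_Gp [simp]: "a \<in> Gp \<Longrightarrow> bp a = a"
  using fplus_eq[of a \<one>] fminus_eq[of a \<one>] bplus_eq[of a \<one>] by simp_all

lemma fplus_Gm [simp]: "b \<in> Gm \<Longrightarrow> fp b = \<one>"
  and fminus_Gm [simp]: "b \<in> Gm \<Longrightarrow> fm b = b"
  and bplus_Gm [simp]: "b \<in> Gm \<Longrightarrow> bp b = \<one>"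
  using fplus_eq[of \<one> b] fminus_eq[of \<one> b] bplus_eq[of \<one> b] by simp_all

lemma factor_eqI:
  "g \<in> carrier G \<Longrightarrow> h \<in> carrier G \<Longrightarrow> fp g = fp h \<Longrightarrow> fm g = fm h \<Longrightarrow> g = h"
  by (metis fplus_fminus)

lemma eq_fplus_mult_iff: "g \<in> carrier G \<Longrightarrow> m \<in> Gm \<Longrightarrow> g = fp g \<otimes> m \<longleftrightarrow> fm g = m"
  by (metis fminus_eq fplus_closed fplus_fminus)

lemma fplus_mult_Gm [simp]: "g \<in> carrier G \<Longrightarrow> m \<in> Gm \<Longrightarrow> fp (g \<otimes> m) = fp g"
  and fminus_mult_Gm [simp]: "g \<in> carrier G \<Longrightarrow> m \<in> Gm \<Longrightarrow> fm (g \<otimes> m) = fm g \<otimes> m"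
proof -
  assume "g \<in> carrier G" "m \<in> Gm"
  then have "g \<otimes> m = fp g \<otimes> (fm g \<otimes> m)"
    by (metis fplus_fminus fminus_closed Gm_carrier fplus_closed Gp_carrier m_assoc)
  with \<open>g \<in> carrier G\<close> \<open>m \<in> Gm\<close> show "fp (g \<otimes> m) = fp g" "fm (g \<otimes> m) = fm g \<otimes> m"
    by simp_all
qed

lemma lact_pm_closed [simp]: "u \<in> Gp \<Longrightarrow> m \<in> Gm \<Longrightarrow> lpm u m \<in> Gm"
  and ract_pm_closed [simp]: "u \<in> Gp \<Longrightarrow> m \<in> Gm \<Longrightarrow> rpm u m \<in> Gp"
  and lact_mp_closed [simp]: "u \<in> Gp \<Longrightarrow> m \<in> Gm \<Longrightarrow> lmp m u \<in> Gp"
  and ract_mp_closed [simp]: "u \<in> Gp \<Longrightarrow> m \<in> Gm \<Longrightarrow> rmp m u \<in> Gm"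
  unfolding lact_pm_def ract_pm_def lact_mp_def ract_mp_def by simp_all

lemma mult_pm_eq: "u \<in> Gp \<Longrightarrow> m \<in> Gm \<Longrightarrow> u \<otimes> m = lpm u m \<otimes> rpm u m"
  unfolding lact_pm_def ract_pm_def by (simp add: bminus_bplus)

lemma mult_mp_eq: "u \<in> Gp \<Longrightarrow> m \<in> Gm \<Longrightarrow> m \<otimes> u = lmp m u \<otimes> rmp m u"
  unfolding lact_mp_def ract_mp_def by (simp add: fplus_fminus)

lemma ract_pm_one [simp]: "u \<in> Gp \<Longrightarrow> rpm u \<one> = u"
  and ract_pm_one_left [simp]: "m \<in> Gm \<Longrightarrow> rpm \<one> m = \<one>"
  unfolding ract_pm_def by simp_all

lemma ract_pm_factors: "g \<in> carrier G \<Longrightarrow> rpm (fp g) (fm g) = bp g"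
  unfolding ract_pm_def by (simp add: fplus_fminus)

lemma actions_inv_ract_mp:
  assumes "m \<in> Gm" "u \<in> Gp"
  shows "lpm u (inv (rmp m u)) = inv m" and "rpm u (inv (rmp m u)) = lmp m u"
proof -
  have "u \<otimes> inv (rmp m u) = inv m \<otimes> lmp m u"
    using mult_eq_mult_rearrange(1)[OF _ _ _ _ mult_mp_eq[OF assms(2,1)]] assms by simp
  then show "lpm u (inv (rmp m u)) = inv m" "rpm u (inv (rmp m u)) = lmp m u"
    unfolding lact_pm_def ract_pm_def using assms by simp_all
qed

lemma lact_pm_eq_invD:
  assumes "n \<in> Gm" "k \<in> Gm" "v \<in> Gp" "lpm v n = inv k"
  shows "n = inv (rmp k v)"
proof -
  have "v \<otimes> n = inv k \<otimes> rpm v n"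
    using mult_pm_eq[OF assms(3,1)] assms(4) by simp
  then have "k \<otimes> v = rpm v n \<otimes> inv n"
    using mult_eq_mult_rearrange(2)[of v n "inv k" "rpm v n"] assms by simp
  then have "rmp k v = inv n"
    unfolding ract_mp_def using assms by simp
  then show ?thesis using assms by simp
qed

lemma ract_mp_mult:
  assumes "n \<in> Gm" "u \<in> Gp" "v \<in> Gp"
  shows "rmp n (u \<otimes> v) = rmp (rmp n u) v"
proof -
  have split1: "n \<otimes> u = lmp n u \<otimes> rmp n u"
    and split2: "rmp n u \<otimes> v = lmp (rmp n u) v \<otimes> rmp (rmp n u) v"
    using assms by (simp_all add: mult_mp_eq)
  have "n \<otimes> (u \<otimes> v) = (lmp n u \<otimes> rmp n u) \<otimes> v"
    using assms by (simp add: m_assoc[symmetric] split1[symmetric])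
  also have "\<dots> = lmp n u \<otimes> (lmp (rmp n u) v \<otimes> rmp (rmp n u) v)"
    using assms by (simp add: m_assoc split2[symmetric])
  also have "\<dots> = (lmp n u \<otimes> lmp (rmp n u) v) \<otimes> rmp (rmp n u) v"
    using assms by (simp add: m_assoc)
  finally show ?thesis
    unfolding ract_mp_def[of G Gp Gm n] using assms by (simp add: ract_mp_def)
qed

lemma ract_mp_mult_Gm:
  assumes "m \<in> Gm" "n \<in> Gm" "u \<in> Gp"
  shows "rmp (m \<otimes> n) u = rmp m (lmp n u) \<otimes> rmp n u"
proof -
  have split1: "n \<otimes> u = lmp n u \<otimes> rmp n u"
    and split2: "m \<otimes> lmp n u = lmp m (lmp n u) \<otimes> rmp m (lmp n u)"
    using assms by (simp_all add: mult_mp_eq)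
  have "(m \<otimes> n) \<otimes> u = (m \<otimes> lmp n u) \<otimes> rmp n u"
    using assms by (simp add: m_assoc split1[symmetric])
  also have "\<dots> = lmp m (lmp n u) \<otimes> (rmp m (lmp n u) \<otimes> rmp n u)"
    using assms by (simp add: m_assoc[symmetric] split2[symmetric])
  finally show ?thesis
    unfolding ract_mp_def[of G Gp Gm "m \<otimes> n"] using assms by (simp add: ract_mp_def)
qed

lemma hom_Gp_Gm_iff: "f \<in> hom (G\<lparr>carrier := Gp\<rparr>) (G\<lparr>carrier := Gm\<rparr>) \<longleftrightarrow>
    (\<forall>u\<in>Gp. f u \<in> Gm) \<and> (\<forall>u\<in>Gp. \<forall>v\<in>Gp. f (u \<otimes> v) = f u \<otimes> f v)"
  unfolding hom_def by auto

section \<open>Monomial elements and their coproducts\<close>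

definition monomial2 ::
    "('a \<Rightarrow> 'a \<Rightarrow> real) \<Rightarrow> ('a \<Rightarrow> 'a \<Rightarrow> 'a) \<Rightarrow> ('a \<Rightarrow> 'a \<Rightarrow> 'a) \<Rightarrow> 'a \<Rightarrow> 'a \<Rightarrow> real" where
  "monomial2 t A B a b =
     (if a \<in> carrier G \<and> b \<in> carrier G \<and>
         fm a = A (fp a) (fp b) \<and> fm b = B (fp a) (fp b)
      then t (fp a) (fp b) else 0)"

definition monomial3 ::
    "('a \<Rightarrow> 'a \<Rightarrow> 'a \<Rightarrow> real) \<Rightarrow> ('a \<Rightarrow> 'a \<Rightarrow> 'a \<Rightarrow> 'a) \<Rightarrow> ('a \<Rightarrow> 'a \<Rightarrow> 'a \<Rightarrow> 'a) \<Rightarrow>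
     ('a \<Rightarrow> 'a \<Rightarrow> 'a \<Rightarrow> 'a) \<Rightarrow> 'a \<Rightarrow> 'a \<Rightarrow> 'a \<Rightarrow> real" where
  "monomial3 T A1 A2 A3 a b c =
     (if a \<in> carrier G \<and> b \<in> carrier G \<and> c \<in> carrier G \<and>
         fm a = A1 (fp a) (fp b) (fp c) \<and> fm b = A2 (fp a) (fp b) (fp c) \<and>
         fm c = A3 (fp a) (fp b) (fp c)
      then T (fp a) (fp b) (fp c) else 0)"

lemma monomial2_eq_sum:
  assumes AB: "\<And>u v. u \<in> Gp \<Longrightarrow> v \<in> Gp \<Longrightarrow> A u v \<in> Gm \<and> B u v \<in> Gm"
  shows "(\<Sum>u\<in>Gp. \<Sum>v\<in>Gp. t u v * (if a = u \<otimes> A u v \<and> b = v \<otimes> B u v then 1 else 0))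
    = monomial2 t A B a b"
proof (cases "a \<in> carrier G \<and> b \<in> carrier G")
  case True
  define F where "F = (\<lambda>(u, v). t u v * (if a = u \<otimes> A u v \<and> b = v \<otimes> B u v then 1 else 0))"
  have "(\<Sum>u\<in>Gp. \<Sum>v\<in>Gp. t u v * (if a = u \<otimes> A u v \<and> b = v \<otimes> B u v then 1 else 0))
      = sum F (Gp \<times> Gp)"
    unfolding F_def by (simp add: sum.cartesian_product)
  also have "\<dots> = F (fp a, fp b)"
    by (rule sum_eq_single_support) (use True AB finite_Gp in \<open>auto simp: F_def split: if_splits\<close>)
  also have "\<dots> = monomial2 t A B a b"
    unfolding F_def monomial2_def using True AB by (simp add: eq_fplus_mult_iff)
  finally show ?thesis .
next
  case False
  then show ?thesis using AB unfolding monomial2_def by (auto intro!: sum.neutral)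
qed

lemma hmc_eq:
  "g \<in> carrier G \<Longrightarrow> hmc G Gp Gm g h k = (if bp g = fp h \<and> k = g \<otimes> fm h then 1 else 0)"
  unfolding hmc_def by (simp add: ract_pm_factors)

lemma mult3_eq_zero_outside:
  assumes "\<not> (a \<in> carrier G \<and> b \<in> carrier G \<and> c \<in> carrier G)"
  shows "mult3 G Gp Gm P Q a b c = 0"
  unfolding mult3_def using assms by (intro sum.neutral ballI) (auto simp: hmc_def)

lemma monomial3_eq_zero_outside:
  "\<not> (a \<in> carrier G \<and> b \<in> carrier G \<and> c \<in> carrier G) \<Longrightarrow> monomial3 T A1 A2 A3 a b c = 0"
  unfolding monomial3_def by auto

lemma dc_eq_zero_outside:
  "\<not> (a \<in> carrier G \<and> b \<in> carrier G) \<Longrightarrow> g \<in> carrier G \<Longrightarrow> dc G Gp Gm g a b = 0"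
  unfolding dc_def by (intro sum.neutral ballI) auto

lemma delta_id_eq_zero_outside:
  assumes "\<not> (a \<in> carrier G \<and> b \<in> carrier G \<and> c \<in> carrier G)"
  shows "delta_id G Gp Gm R a b c = 0"
  unfolding delta_id_def using assms by (intro sum.neutral ballI) (auto simp: dc_eq_zero_outside)

lemma id_delta_eq_zero_outside:
  assumes "\<not> (a \<in> carrier G \<and> b \<in> carrier G \<and> c \<in> carrier G)"
  shows "id_delta G Gp Gm R a b c = 0"
  unfolding id_delta_def using assms by (intro sum.neutral ballI) (auto simp: dc_eq_zero_outside)


lemma delta_id_monomial2:
  assumes AB: "\<And>u v. u \<in> Gp \<Longrightarrow> v \<in> Gp \<Longrightarrow> A u v \<in> Gm \<and> B u v \<in> Gm"
  shows "delta_id G Gp Gm (monomial2 t A B) =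
    monomial3 (\<lambda>x v w. t (x \<otimes> v) w) (\<lambda>x v w. lpm v (A (x \<otimes> v) w))
      (\<lambda>x v w. A (x \<otimes> v) w) (\<lambda>x v w. B (x \<otimes> v) w)" (is "?L = ?R")
proof (intro ext)
  fix a b c
  show "?L a b c = ?R a b c"
  proof (cases "a \<in> carrier G \<and> b \<in> carrier G \<and> c \<in> carrier G")
    case False
    then show ?thesis by (simp only: delta_id_eq_zero_outside[OF False] monomial3_eq_zero_outside[OF False])
  next
    case True
    define F where "F = (\<lambda>(g, g', h). monomial2 t A B g g' *
      (if a = fp g \<otimes> inv h \<otimes> lpm h (fm g) \<and> b = h \<otimes> fm g then 1 else 0) *
      (if c = g' then 1 else 0))"
    define x0 where "x0 = (fp a \<otimes> fp b) \<otimes> fm b"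
    have x0: "x0 \<in> carrier G" "fp x0 = fp a \<otimes> fp b" "fm x0 = fm b"
      unfolding x0_def using True by simp_all
    have "?L a b c = sum F (carrier G \<times> carrier G \<times> Gp)"
      unfolding delta_id_def dc_def F_def
      by (simp add: sum_distrib_left sum_distrib_right sum.cartesian_product)
    also have "\<dots> = F (x0, c, fp b)"
    proof (rule sum_eq_single_support)
      fix p assume "p \<in> carrier G \<times> carrier G \<times> Gp" "F p \<noteq> 0"
      then obtain g h where p: "p = (g, c, h)" "g \<in> carrier G" "h \<in> Gp"
        and e: "a = fp g \<otimes> inv h \<otimes> lpm h (fm g)" "b = h \<otimes> fm g"
        unfolding F_def by (auto split: if_splits)
      have "fp a = fp g \<otimes> inv h"
        using e p by simp
      then have "fp a \<otimes> fp b = fp g"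
        using e p by (simp add: m_assoc)
      then show "p = (x0, c, fp b)"
        using e p x0 by (simp add: factor_eqI)
    qed (use True x0 finite_carrier finite_Gp in auto)
    also have "\<dots> = ?R a b c"
    proof -
      have "fp a \<otimes> fp b \<otimes> inv (fp b) = fp a"
        using True by (simp add: m_assoc)
      then have "a = fp x0 \<otimes> inv (fp b) \<otimes> lpm (fp b) (fm x0) \<longleftrightarrow> fm a = lpm (fp b) (fm b)"
        using x0 True eq_fplus_mult_iff[of a "lpm (fp b) (fm b)"] by simp
      moreover have "b = fp b \<otimes> fm x0"
        using x0 True by (simp add: fplus_fminus)
      ultimately show ?thesis
        unfolding F_def monomial2_def monomial3_def using x0 True by auto
    qed
    finally show ?thesis .
  qed
qed

lemma id_delta_monomial2:
  assumes AB: "\<And>u v. u \<in> Gp \<Longrightarrow> v \<in> Gp \<Longrightarrow> A u v \<in> Gm \<and> B u v \<in> Gm"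
  shows "id_delta G Gp Gm (monomial2 t A B) =
    monomial3 (\<lambda>u y v. t u (y \<otimes> v)) (\<lambda>u y v. A u (y \<otimes> v))
      (\<lambda>u y v. lpm v (B u (y \<otimes> v))) (\<lambda>u y v. B u (y \<otimes> v))" (is "?L = ?R")
proof (intro ext)
  fix a b c
  show "?L a b c = ?R a b c"
  proof (cases "a \<in> carrier G \<and> b \<in> carrier G \<and> c \<in> carrier G")
    case False
    then show ?thesis by (simp only: id_delta_eq_zero_outside[OF False] monomial3_eq_zero_outside[OF False])
  next
    case True
    define F where "F = (\<lambda>(g', g, h). monomial2 t A B g' g * (if a = g' then 1 else 0) *
      (if b = fp g \<otimes> inv h \<otimes> lpm h (fm g) \<and> c = h \<otimes> fm g then 1 else 0))"
    define x0 where "x0 = (fp b \<otimes> fp c) \<otimes> fm c"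
    have x0: "x0 \<in> carrier G" "fp x0 = fp b \<otimes> fp c" "fm x0 = fm c"
      unfolding x0_def using True by simp_all
    have "?L a b c = sum F (carrier G \<times> carrier G \<times> Gp)"
      unfolding id_delta_def dc_def F_def
      by (simp add: sum_distrib_left sum.cartesian_product)
    also have "\<dots> = F (a, x0, fp c)"
    proof (rule sum_eq_single_support)
      fix p assume "p \<in> carrier G \<times> carrier G \<times> Gp" "F p \<noteq> 0"
      then obtain g h where p: "p = (a, g, h)" "g \<in> carrier G" "h \<in> Gp"
        and e: "b = fp g \<otimes> inv h \<otimes> lpm h (fm g)" "c = h \<otimes> fm g"
        unfolding F_def by (auto split: if_splits)
      have "fp b = fp g \<otimes> inv h"
        using e p by simp
      then have "fp b \<otimes> fp c = fp g"
        using e p by (simp add: m_assoc)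
      then show "p = (a, x0, fp c)"
        using e p x0 by (simp add: factor_eqI)
    qed (use True x0 finite_carrier finite_Gp in auto)
    also have "\<dots> = ?R a b c"
    proof -
      have "fp b \<otimes> fp c \<otimes> inv (fp c) = fp b"
        using True by (simp add: m_assoc)
      then have "b = fp x0 \<otimes> inv (fp c) \<otimes> lpm (fp c) (fm x0) \<longleftrightarrow> fm b = lpm (fp c) (fm c)"
        using x0 True eq_fplus_mult_iff[of b "lpm (fp c) (fm c)"] by simp
      moreover have "c = fp c \<otimes> fm x0"
        using x0 True by (simp add: fplus_fminus)
      ultimately show ?thesis
        unfolding F_def monomial2_def monomial3_def using x0 True by auto
    qed
    finally show ?thesis .
  qed
qed


lemma mult3_leg13_leg23_monomial2_single_term:
  fixes t :: "'a \<Rightarrow> 'a \<Rightarrow> real"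
  assumes AB: "\<And>u v. u \<in> Gp \<Longrightarrow> v \<in> Gp \<Longrightarrow> A u v \<in> Gm \<and> B u v \<in> Gm"
    and abc: "a \<in> carrier G" "b \<in> carrier G" "c \<in> carrier G"
  defines "M \<equiv> monomial2 t A B" and "w \<equiv> rpm (fp c) (B (fp a) (fp c))"
    and "z \<equiv> fp c \<otimes> B (fp a) (fp c)"
    and "r \<equiv> rpm (fp c) (B (fp a) (fp c)) \<otimes> B (fp b) (rpm (fp c) (B (fp a) (fp c)))"
  shows "mult3 G Gp Gm (leg13 Gp M) (leg23 Gp M) a b c = M a z * M b r * hmc G Gp Gm z r c"
proof -
  define F where "F = (\<lambda>(g1, g2, g3, h1, h2, h3). leg13 Gp M g1 g2 g3 * leg23 Gp M h1 h2 h3 *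
    hmc G Gp Gm g1 h1 a * hmc G Gp Gm g2 h2 b * hmc G Gp Gm g3 h3 c)"
  have w: "w \<in> Gp" "B (fp a) (fp c) \<in> Gm" "B (fp b) w \<in> Gm"
    unfolding w_def using abc AB by simp_all
  have z: "z \<in> carrier G" "fp z = fp c" "fm z = B (fp a) (fp c)"
    unfolding z_def using abc w by simp_all
  have r: "r \<in> carrier G" "fp r = w" "fm r = B (fp b) w"
    unfolding r_def w_def[symmetric] using w by simp_all
  have "mult3 G Gp Gm (leg13 Gp M) (leg23 Gp M) a b c =
      sum F (carrier G \<times> carrier G \<times> carrier G \<times> carrier G \<times> carrier G \<times> carrier G)"
    unfolding mult3_def F_def by (simp add: sum.cartesian_product)
  also have "\<dots> = F (a, fp b, z, bp a, b, r)"
  proof (rule sum_eq_single_support)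
    fix p assume "p \<in> carrier G \<times> carrier G \<times> carrier G \<times> carrier G \<times> carrier G \<times> carrier G"
      and "F p \<noteq> 0"
    then obtain g1 g2 g3 h1 h2 h3 where p: "p = (g1, g2, g3, h1, h2, h3)"
      and carr: "g1 \<in> carrier G" "g3 \<in> carrier G" "h2 \<in> carrier G" "h3 \<in> carrier G"
      and Gp: "g2 \<in> Gp" "h1 \<in> Gp"
      and M: "M g1 g3 \<noteq> 0" "M h2 h3 \<noteq> 0"
      and k: "hmc G Gp Gm g1 h1 a \<noteq> 0" "hmc G Gp Gm g2 h2 b \<noteq> 0" "hmc G Gp Gm g3 h3 c \<noteq> 0"
      unfolding F_def leg13_def leg23_def by (auto split: if_splits)
    have e1: "fm g3 = B (fp g1) (fp g3)" and e2: "fm h3 = B (fp h2) (fp h3)"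
      using M unfolding M_def monomial2_def by (auto split: if_splits)
    have k1: "bp g1 = h1" "a = g1"
      using k(1) carr Gp by (auto simp: hmc_eq split: if_splits)
    have k2: "g2 = fp b" "h2 = b"
      using k(2) carr Gp by (auto simp: hmc_eq fplus_fminus split: if_splits)
    have k3: "bp g3 = fp h3" "c = g3 \<otimes> fm h3"
      using k(3) carr by (auto simp: hmc_eq split: if_splits)
    have g3: "g3 = z"
      using k1 k3 e1 carr z by (simp add: factor_eqI)
    have "fp h3 = w"
      using k3 g3 z carr by (metis ract_pm_factors w_def)
    then have "h3 = r"
      using k2 e2 carr r by (simp add: factor_eqI)
    then show "p = (a, fp b, z, bp a, b, r)"
      using p k1 k2 g3 by simp
  qed (use abc z r finite_carrier in auto)
  also have "\<dots> = M a z * M b r * hmc G Gp Gm z r c"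
    unfolding F_def leg13_def leg23_def using abc by (simp add: hmc_eq fplus_fminus)
  finally show ?thesis .
qed

lemma mult3_leg13_leg23_monomial2:
  assumes AB: "\<And>u v. u \<in> Gp \<Longrightarrow> v \<in> Gp \<Longrightarrow> A u v \<in> Gm \<and> B u v \<in> Gm"
  shows "mult3 G Gp Gm (leg13 Gp (monomial2 t A B)) (leg23 Gp (monomial2 t A B)) =
    monomial3 (\<lambda>u v w. t u w * t v (rpm w (B u w))) (\<lambda>u v w. A u w)
      (\<lambda>u v w. A v (rpm w (B u w))) (\<lambda>u v w. B u w \<otimes> B v (rpm w (B u w)))" (is "?L = ?R")
proof (intro ext)
  fix a b c
  show "?L a b c = ?R a b c"
  proof (cases "a \<in> carrier G \<and> b \<in> carrier G \<and> c \<in> carrier G")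
    case False
    then show ?thesis by (simp only: mult3_eq_zero_outside[OF False] monomial3_eq_zero_outside[OF False])
  next
    case True
    then have abc: "a \<in> carrier G" "b \<in> carrier G" "c \<in> carrier G"
      by simp_all
    define w where "w = rpm (fp c) (B (fp a) (fp c))"
    define z where "z = fp c \<otimes> B (fp a) (fp c)"
    define r where "r = w \<otimes> B (fp b) w"
    have w: "w \<in> Gp" "B (fp a) (fp c) \<in> Gm" "B (fp b) w \<in> Gm"
      unfolding w_def using True AB by simp_all
    have z: "z \<in> carrier G" "fp z = fp c" "fm z = B (fp a) (fp c)"
      unfolding z_def using True w by simp_all
    have r: "r \<in> carrier G" "fp r = w" "fm r = B (fp b) w"
      unfolding r_def using w by simp_all
    have "hmc G Gp Gm z r c = (if fm c = B (fp a) (fp c) \<otimes> B (fp b) w then 1 else 0)"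
    proof -
      have "bp z = fp r"
        using z r True w unfolding w_def by (simp add: ract_pm_factors[symmetric])
      moreover have "z \<otimes> fm r = fp c \<otimes> (B (fp a) (fp c) \<otimes> B (fp b) w)"
        unfolding z_def using r True w by (simp add: m_assoc)
      ultimately show ?thesis
        using z True w eq_fplus_mult_iff[of c] by (simp add: hmc_eq)
    qed
    moreover have "monomial2 t A B a z = (if fm a = A (fp a) (fp c) then t (fp a) (fp c) else 0)"
      and "monomial2 t A B b r = (if fm b = A (fp b) w then t (fp b) w else 0)"
      unfolding monomial2_def using z r True by simp_all
    ultimately show ?thesis
      using mult3_leg13_leg23_monomial2_single_term[OF AB abc]
      unfolding monomial3_def w_def z_def r_def using True by simp
  qed
qed

lemma mult3_leg13_leg12_monomial2_single_term:
  fixes t :: "'a \<Rightarrow> 'a \<Rightarrow> real"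
  assumes AB: "\<And>u v. u \<in> Gp \<Longrightarrow> v \<in> Gp \<Longrightarrow> A u v \<in> Gm \<and> B u v \<in> Gm"
    and abc: "a \<in> carrier G" "b \<in> carrier G" "c \<in> carrier G"
  defines "M \<equiv> monomial2 t A B" and "u \<equiv> rpm (fp a) (A (fp a) (fp c))"
    and "x \<equiv> fp a \<otimes> A (fp a) (fp c)"
    and "p \<equiv> rpm (fp a) (A (fp a) (fp c)) \<otimes> A (rpm (fp a) (A (fp a) (fp c))) (fp b)"
  shows "mult3 G Gp Gm (leg13 Gp M) (leg12 Gp M) a b c = M x c * M p b * hmc G Gp Gm x p a"
proof -
  define F where "F = (\<lambda>(g1, g2, g3, h1, h2, h3). leg13 Gp M g1 g2 g3 * leg12 Gp M h1 h2 h3 *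
    hmc G Gp Gm g1 h1 a * hmc G Gp Gm g2 h2 b * hmc G Gp Gm g3 h3 c)"
  have u: "u \<in> Gp" "A (fp a) (fp c) \<in> Gm" "A u (fp b) \<in> Gm"
    unfolding u_def using abc AB by simp_all
  have x: "x \<in> carrier G" "fp x = fp a" "fm x = A (fp a) (fp c)"
    unfolding x_def using abc u by simp_all
  have p: "p \<in> carrier G" "fp p = u" "fm p = A u (fp b)"
    unfolding p_def u_def[symmetric] using u by simp_all
  have "mult3 G Gp Gm (leg13 Gp M) (leg12 Gp M) a b c =
      sum F (carrier G \<times> carrier G \<times> carrier G \<times> carrier G \<times> carrier G \<times> carrier G)"
    unfolding mult3_def F_def by (simp add: sum.cartesian_product)
  also have "\<dots> = F (x, fp b, c, p, b, bp c)"
  proof (rule sum_eq_single_support)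
    fix q assume "q \<in> carrier G \<times> carrier G \<times> carrier G \<times> carrier G \<times> carrier G \<times> carrier G"
      and "F q \<noteq> 0"
    then obtain g1 g2 g3 h1 h2 h3 where q: "q = (g1, g2, g3, h1, h2, h3)"
      and carr: "g1 \<in> carrier G" "g3 \<in> carrier G" "h1 \<in> carrier G" "h2 \<in> carrier G"
      and Gp: "g2 \<in> Gp" "h3 \<in> Gp"
      and M: "M g1 g3 \<noteq> 0" "M h1 h2 \<noteq> 0"
      and k: "hmc G Gp Gm g1 h1 a \<noteq> 0" "hmc G Gp Gm g2 h2 b \<noteq> 0" "hmc G Gp Gm g3 h3 c \<noteq> 0"
      unfolding F_def leg13_def leg12_def by (auto split: if_splits)
    have e1: "fm g1 = A (fp g1) (fp g3)" and e2: "fm h1 = A (fp h1) (fp h2)"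
      using M unfolding M_def monomial2_def by (auto split: if_splits)
    have k3: "bp g3 = h3" "c = g3"
      using k(3) carr Gp by (auto simp: hmc_eq split: if_splits)
    have k2: "g2 = fp b" "h2 = b"
      using k(2) carr Gp by (auto simp: hmc_eq fplus_fminus split: if_splits)
    have k1: "bp g1 = fp h1" "a = g1 \<otimes> fm h1"
      using k(1) carr by (auto simp: hmc_eq split: if_splits)
    have g1: "g1 = x"
      using k1 k3 e1 carr x by (simp add: factor_eqI)
    have "fp h1 = u"
      using k1 g1 x carr by (metis ract_pm_factors u_def)
    then have "h1 = p"
      using k2 e2 carr p by (simp add: factor_eqI)
    then show "q = (x, fp b, c, p, b, bp c)"
      using q k3 k2 g1 by simp
  qed (use abc x p finite_carrier in auto)
  also have "\<dots> = M x c * M p b * hmc G Gp Gm x p a"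
    unfolding F_def leg13_def leg12_def using abc by (simp add: hmc_eq fplus_fminus)
  finally show ?thesis .
qed

lemma mult3_leg13_leg12_monomial2:
  assumes AB: "\<And>u v. u \<in> Gp \<Longrightarrow> v \<in> Gp \<Longrightarrow> A u v \<in> Gm \<and> B u v \<in> Gm"
  shows "mult3 G Gp Gm (leg13 Gp (monomial2 t A B)) (leg12 Gp (monomial2 t A B)) =
    monomial3 (\<lambda>u y v. t u v * t (rpm u (A u v)) y) (\<lambda>u y v. A u v \<otimes> A (rpm u (A u v)) y)
      (\<lambda>u y v. B (rpm u (A u v)) y) (\<lambda>u y v. B u v)" (is "?L = ?R")
proof (intro ext)
  fix a b c
  show "?L a b c = ?R a b c"
  proof (cases "a \<in> carrier G \<and> b \<in> carrier G \<and> c \<in> carrier G")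
    case False
    then show ?thesis by (simp only: mult3_eq_zero_outside[OF False] monomial3_eq_zero_outside[OF False])
  next
    case True
    then have abc: "a \<in> carrier G" "b \<in> carrier G" "c \<in> carrier G"
      by simp_all
    define u where "u = rpm (fp a) (A (fp a) (fp c))"
    define x where "x = fp a \<otimes> A (fp a) (fp c)"
    define p where "p = u \<otimes> A u (fp b)"
    have u: "u \<in> Gp" "A (fp a) (fp c) \<in> Gm" "A u (fp b) \<in> Gm"
      unfolding u_def using True AB by simp_all
    have x: "x \<in> carrier G" "fp x = fp a" "fm x = A (fp a) (fp c)"
      unfolding x_def using True u by simp_all
    have p: "p \<in> carrier G" "fp p = u" "fm p = A u (fp b)"
      unfolding p_def using u by simp_all
    have "hmc G Gp Gm x p a = (if fm a = A (fp a) (fp c) \<otimes> A u (fp b) then 1 else 0)"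
    proof -
      have "bp x = fp p"
        using x p True u unfolding u_def by (simp add: ract_pm_factors[symmetric])
      moreover have "x \<otimes> fm p = fp a \<otimes> (A (fp a) (fp c) \<otimes> A u (fp b))"
        unfolding x_def using p True u by (simp add: m_assoc)
      ultimately show ?thesis
        using x True u eq_fplus_mult_iff[of a] by (simp add: hmc_eq)
    qed
    moreover have "monomial2 t A B x c = (if fm c = B (fp a) (fp c) then t (fp a) (fp c) else 0)"
      and "monomial2 t A B p b = (if fm b = B u (fp b) then t u (fp b) else 0)"
      unfolding monomial2_def using x p True by simp_all
    ultimately show ?thesis
      using mult3_leg13_leg12_monomial2_single_term[OF AB abc]
      unfolding monomial3_def u_def x_def p_def using True by simp
  qed
qed

lemma monomial3_eq_iff:
  assumes "\<And>x y z. x \<in> Gp \<Longrightarrow> y \<in> Gp \<Longrightarrow> z \<in> Gp \<Longrightarrow>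
    A1 x y z \<in> Gm \<and> A2 x y z \<in> Gm \<and> A3 x y z \<in> Gm \<and> T x y z \<noteq> 0"
  shows "monomial3 T A1 A2 A3 = monomial3 T' A1' A2' A3' \<longleftrightarrow>
    (\<forall>x\<in>Gp. \<forall>y\<in>Gp. \<forall>z\<in>Gp. T x y z = T' x y z \<and>
       A1 x y z = A1' x y z \<and> A2 x y z = A2' x y z \<and> A3 x y z = A3' x y z)"
proof
  assume eq: "monomial3 T A1 A2 A3 = monomial3 T' A1' A2' A3'"
  show "\<forall>x\<in>Gp. \<forall>y\<in>Gp. \<forall>z\<in>Gp. T x y z = T' x y z \<and>
       A1 x y z = A1' x y z \<and> A2 x y z = A2' x y z \<and> A3 x y z = A3' x y z"
  proof (intro ballI)
    fix x y z assume xyz: "x \<in> Gp" "y \<in> Gp" "z \<in> Gp"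
    define a b c where "a = x \<otimes> A1 x y z" and "b = y \<otimes> A2 x y z" and "c = z \<otimes> A3 x y z"
    have abc: "a \<in> carrier G" "b \<in> carrier G" "c \<in> carrier G" "fp a = x" "fp b = y" "fp c = z"
      "fm a = A1 x y z" "fm b = A2 x y z" "fm c = A3 x y z"
      unfolding a_def b_def c_def using assms xyz by simp_all
    have "monomial3 T A1 A2 A3 a b c = T x y z"
      unfolding monomial3_def using abc by simp
    moreover have "T x y z \<noteq> 0"
      using assms xyz by blast
    ultimately have "monomial3 T' A1' A2' A3' a b c = T x y z" "T x y z \<noteq> 0"
      using eq by simp_all
    then show "T x y z = T' x y z \<and>
       A1 x y z = A1' x y z \<and> A2 x y z = A2' x y z \<and> A3 x y z = A3' x y z"
      unfolding monomial3_def using abc by (auto split: if_splits)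
  qed
next
  assume "\<forall>x\<in>Gp. \<forall>y\<in>Gp. \<forall>z\<in>Gp. T x y z = T' x y z \<and>
       A1 x y z = A1' x y z \<and> A2 x y z = A2' x y z \<and> A3 x y z = A3' x y z"
  then show "monomial3 T A1 A2 A3 = monomial3 T' A1' A2' A3'"
    unfolding monomial3_def by (intro ext) auto
qed

definition delta_id_conditions ::
    "('a \<Rightarrow> 'a \<Rightarrow> real) \<Rightarrow> ('a \<Rightarrow> 'a \<Rightarrow> 'a) \<Rightarrow> ('a \<Rightarrow> 'a \<Rightarrow> 'a) \<Rightarrow> bool" where
  "delta_id_conditions t A B \<longleftrightarrow> (\<forall>x\<in>Gp. \<forall>v\<in>Gp. \<forall>w\<in>Gp.
     t (x \<otimes> v) w = t x w * t v (rpm w (B x w)) \<and>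
     lpm v (A (x \<otimes> v) w) = A x w \<and>
     A (x \<otimes> v) w = A v (rpm w (B x w)) \<and>
     B (x \<otimes> v) w = B x w \<otimes> B v (rpm w (B x w)))"

definition id_delta_conditions ::
    "('a \<Rightarrow> 'a \<Rightarrow> real) \<Rightarrow> ('a \<Rightarrow> 'a \<Rightarrow> 'a) \<Rightarrow> ('a \<Rightarrow> 'a \<Rightarrow> 'a) \<Rightarrow> bool" where
  "id_delta_conditions t A B \<longleftrightarrow> (\<forall>u\<in>Gp. \<forall>y\<in>Gp. \<forall>v\<in>Gp.
     t u (y \<otimes> v) = t u v * t (rpm u (A u v)) y \<and>
     A u (y \<otimes> v) = A u v \<otimes> A (rpm u (A u v)) y \<and>
     lpm v (B u (y \<otimes> v)) = B (rpm u (A u v)) y \<and>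
     B u (y \<otimes> v) = B u v)"

lemma delta_id_monomial2_iff:
  assumes AB: "\<And>u v. u \<in> Gp \<Longrightarrow> v \<in> Gp \<Longrightarrow> A u v \<in> Gm \<and> B u v \<in> Gm"
    and t: "\<And>u v. u \<in> Gp \<Longrightarrow> v \<in> Gp \<Longrightarrow> t u v \<noteq> 0"
  shows "delta_id G Gp Gm (monomial2 t A B) =
      mult3 G Gp Gm (leg13 Gp (monomial2 t A B)) (leg23 Gp (monomial2 t A B)) \<longleftrightarrow>
    delta_id_conditions t A B"
  unfolding delta_id_conditions_def
  by (simp only: delta_id_monomial2[OF AB] mult3_leg13_leg23_monomial2[OF AB], rule monomial3_eq_iff)
    (simp add: AB t)

lemma id_delta_monomial2_iff:
  assumes AB: "\<And>u v. u \<in> Gp \<Longrightarrow> v \<in> Gp \<Longrightarrow> A u v \<in> Gm \<and> B u v \<in> Gm"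
    and t: "\<And>u v. u \<in> Gp \<Longrightarrow> v \<in> Gp \<Longrightarrow> t u v \<noteq> 0"
  shows "id_delta G Gp Gm (monomial2 t A B) =
      mult3 G Gp Gm (leg13 Gp (monomial2 t A B)) (leg12 Gp (monomial2 t A B)) \<longleftrightarrow>
    id_delta_conditions t A B"
  unfolding id_delta_conditions_def
  by (simp only: id_delta_monomial2[OF AB] mult3_leg13_leg12_monomial2[OF AB], rule monomial3_eq_iff)
    (simp add: AB t)


lemma R_of_eq_monomial2:
  assumes "\<And>u. u \<in> Gp \<Longrightarrow> \<xi> u \<in> Gm" "\<And>u. u \<in> Gp \<Longrightarrow> \<eta> u \<in> Gm"
  shows "R_of G Gp Gm \<xi> \<eta> r = monomial2 r (\<lambda>u v. inv (rmp (\<eta> v) u)) (\<lambda>u v. \<xi> u)"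
  unfolding R_of_def
  using monomial2_eq_sum[of "\<lambda>u v. inv (rmp (\<eta> v) u)" "\<lambda>u v. \<xi> u" r] assms by (intro ext) simp

lemma admissible_data_imp_coproduct_conditions:
  assumes "admissible_data G Gp Gm \<xi> \<eta> r"
  defines "A \<equiv> \<lambda>u v. inv (rmp (\<eta> v) u)" and "B \<equiv> \<lambda>u v. \<xi> u"
  shows "delta_id_conditions r A B" and "id_delta_conditions r A B"
proof -
  have \<xi>: "\<And>u. u \<in> Gp \<Longrightarrow> \<xi> u \<in> Gm" "\<And>u v. u \<in> Gp \<Longrightarrow> v \<in> Gp \<Longrightarrow> \<xi> (u \<otimes> v) = \<xi> u \<otimes> \<xi> v"
    and \<eta>: "\<And>u. u \<in> Gp \<Longrightarrow> \<eta> u \<in> Gm" "\<And>u v. u \<in> Gp \<Longrightarrow> v \<in> Gp \<Longrightarrow> \<eta> (u \<otimes> v) = \<eta> u \<otimes> \<eta> v"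
    using assms(1) unfolding admissible_data_def hom_Gp_Gm_iff by auto
  have id1: "\<And>u v. u \<in> Gp \<Longrightarrow> v \<in> Gp \<Longrightarrow> lpm v (\<xi> u) = \<xi> (lmp (\<eta> v) u)"
    and id2: "\<And>u v. u \<in> Gp \<Longrightarrow> v \<in> Gp \<Longrightarrow> rmp (\<eta> v) u = \<eta> (rpm v (\<xi> u))"
    and id3: "\<And>u v w. u \<in> Gp \<Longrightarrow> v \<in> Gp \<Longrightarrow> w \<in> Gp \<Longrightarrow> r (u \<otimes> w) v = r u v * r w (rpm v (\<xi> u))"
    and id4: "\<And>u v w. u \<in> Gp \<Longrightarrow> v \<in> Gp \<Longrightarrow> w \<in> Gp \<Longrightarrow> r u (w \<otimes> v) = r u v * r (lmp (\<eta> v) u) w"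
    using assms(1) unfolding admissible_data_def by blast+
  show "delta_id_conditions r A B"
    unfolding delta_id_conditions_def
  proof (intro ballI conjI)
    fix x v w assume p: "x \<in> Gp" "v \<in> Gp" "w \<in> Gp"
    have rmp_mult: "rmp (\<eta> w) (x \<otimes> v) = rmp (rmp (\<eta> w) x) v"
      using ract_mp_mult \<eta> p by simp
    show "r (x \<otimes> v) w = r x w * r v (rpm w (B x w))"
      unfolding B_def using id3 p by simp
    show "lpm v (A (x \<otimes> v) w) = A x w"
      unfolding A_def rmp_mult using actions_inv_ract_mp(1) \<eta> p by simp
    show "A (x \<otimes> v) w = A v (rpm w (B x w))"
      unfolding A_def B_def rmp_mult using id2 p by simp
    show "B (x \<otimes> v) w = B x w \<otimes> B v (rpm w (B x w))"
      unfolding B_def using \<xi> p by simp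
  qed
  show "id_delta_conditions r A B"
    unfolding id_delta_conditions_def
  proof (intro ballI conjI)
    fix u y v assume p: "u \<in> Gp" "y \<in> Gp" "v \<in> Gp"
    have rpm_A: "rpm u (A u v) = lmp (\<eta> v) u"
      unfolding A_def using actions_inv_ract_mp(2) \<eta> p by simp
    show "r u (y \<otimes> v) = r u v * r (rpm u (A u v)) y"
      unfolding rpm_A using id4 p by simp
    have "rmp (\<eta> (y \<otimes> v)) u = rmp (\<eta> y) (lmp (\<eta> v) u) \<otimes> rmp (\<eta> v) u"
      using \<eta> p ract_mp_mult_Gm by simp
    then show "A u (y \<otimes> v) = A u v \<otimes> A (rpm u (A u v)) y"
      unfolding rpm_A unfolding A_def using \<eta> p by (simp add: inv_mult_group)
    show "lpm v (B u (y \<otimes> v)) = B (rpm u (A u v)) y"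
      unfolding rpm_A B_def using id1 p by simp
    show "B u (y \<otimes> v) = B u v"
      unfolding B_def ..
  qed
qed


lemma monomial2_cong:
  assumes "\<And>u v. u \<in> Gp \<Longrightarrow> v \<in> Gp \<Longrightarrow> t u v = t' u v \<and> A u v = A' u v \<and> B u v = B' u v"
  shows "monomial2 t A B = monomial2 t' A' B'"
  unfolding monomial2_def using assms by (intro ext) auto

lemma coproduct_conditions_normal_form:
  assumes AB: "\<And>u v. u \<in> Gp \<Longrightarrow> v \<in> Gp \<Longrightarrow> A u v \<in> Gm \<and> B u v \<in> Gm"
    and D: "delta_id_conditions t A B" and E: "id_delta_conditions t A B"
    and uv: "u \<in> Gp" "v \<in> Gp"
  shows "B u v = B u \<one>" and "A u v = inv (rmp (inv (A \<one> v)) u)"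
proof -
  have "B u (v \<otimes> \<one>) = B u \<one>"
    using E uv Gp_one unfolding id_delta_conditions_def by blast
  then show "B u v = B u \<one>"
    using uv by simp
  have "lpm u (A (\<one> \<otimes> u) v) = A \<one> v"
    using D uv Gp_one unfolding delta_id_conditions_def by blast
  then have "lpm u (A u v) = inv (inv (A \<one> v))"
    using uv AB by simp
  then show "A u v = inv (rmp (inv (A \<one> v)) u)"
    using lact_pm_eq_invD AB uv by simp
qed

lemma coproduct_conditions_homs:
  assumes AB: "\<And>u v. u \<in> Gp \<Longrightarrow> v \<in> Gp \<Longrightarrow> A u v \<in> Gm \<and> B u v \<in> Gm"
    and D: "delta_id_conditions t A B" and E: "id_delta_conditions t A B"
  shows "(\<lambda>u. B u \<one>) \<in> hom (G\<lparr>carrier := Gp\<rparr>) (G\<lparr>carrier := Gm\<rparr>)"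
    and "(\<lambda>v. inv (A \<one> v)) \<in> hom (G\<lparr>carrier := Gp\<rparr>) (G\<lparr>carrier := Gm\<rparr>)"
proof -
  have "B (u \<otimes> v) \<one> = B u \<one> \<otimes> B v (rpm \<one> (B u \<one>))" if "u \<in> Gp" "v \<in> Gp" for u v
    using D that unfolding delta_id_conditions_def by simp
  then show "(\<lambda>u. B u \<one>) \<in> hom (G\<lparr>carrier := Gp\<rparr>) (G\<lparr>carrier := Gm\<rparr>)"
    unfolding hom_Gp_Gm_iff using AB by simp
  have "A \<one> (y \<otimes> v) = A \<one> v \<otimes> A (rpm \<one> (A \<one> v)) y" if "y \<in> Gp" "v \<in> Gp" for y v
    using E that unfolding id_delta_conditions_def by simp
  then have "inv (A \<one> (y \<otimes> v)) = inv (A \<one> y) \<otimes> inv (A \<one> v)" if "y \<in> Gp" "v \<in> Gp" for y v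
    using that AB by (simp add: inv_mult_group)
  then show "(\<lambda>v. inv (A \<one> v)) \<in> hom (G\<lparr>carrier := Gp\<rparr>) (G\<lparr>carrier := Gm\<rparr>)"
    unfolding hom_Gp_Gm_iff using AB by simp
qed

lemma coproduct_conditions_imp_admissible_data:
  assumes AB: "\<And>u v. u \<in> Gp \<Longrightarrow> v \<in> Gp \<Longrightarrow> A u v \<in> Gm \<and> B u v \<in> Gm"
    and t: "\<And>u v. u \<in> Gp \<Longrightarrow> v \<in> Gp \<Longrightarrow> t u v > 0"
    and D: "delta_id_conditions t A B" and E: "id_delta_conditions t A B"
  shows "admissible_data G Gp Gm (\<lambda>u. B u \<one>) (\<lambda>v. inv (A \<one> v)) t"
proof -
  define \<xi> where "\<xi> u = B u \<one>" for u
  define \<eta> where "\<eta> v = inv (A \<one> v)" for v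
  have \<xi>_Gm: "\<xi> u \<in> Gm" and \<eta>_Gm: "\<eta> u \<in> Gm" if "u \<in> Gp" for u
    unfolding \<xi>_def \<eta>_def using AB that by simp_all
  have B: "B u v = \<xi> u" and A: "A u v = inv (rmp (\<eta> v) u)" if "u \<in> Gp" "v \<in> Gp" for u v
    using coproduct_conditions_normal_form[OF AB D E that] unfolding \<xi>_def \<eta>_def by simp_all
  have rpm_A: "rpm u (A u v) = lmp (\<eta> v) u" if "u \<in> Gp" "v \<in> Gp" for u v
    using A[OF that] actions_inv_ract_mp(2) \<eta>_Gm that by simp
  have D_t: "t (x \<otimes> v) w = t x w * t v (rpm w (B x w))"
    and D_A: "A (x \<otimes> v) w = A v (rpm w (B x w))"
    if "x \<in> Gp" "v \<in> Gp" "w \<in> Gp" for x v w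
    using D that unfolding delta_id_conditions_def by blast+
  have E_t: "t u (y \<otimes> v) = t u v * t (rpm u (A u v)) y"
    and E_B: "lpm v (B u (y \<otimes> v)) = B (rpm u (A u v)) y"
    if "u \<in> Gp" "y \<in> Gp" "v \<in> Gp" for u y v
    using E that unfolding id_delta_conditions_def by blast+
  have "lpm v (\<xi> u) = \<xi> (lmp (\<eta> v) u)" if "u \<in> Gp" "v \<in> Gp" for u v
    using E_B[OF that(1) Gp_one that(2)] that B rpm_A \<eta>_Gm by simp
  moreover have "rmp (\<eta> v) u = \<eta> (rpm v (\<xi> u))" if "u \<in> Gp" "v \<in> Gp" for u v
  proof -
    have "inv (rmp (\<eta> v) u) = A \<one> (rpm v (\<xi> u))"
      using D_A[OF that(1) Gp_one that(2)] A[OF that] B[OF that] that by simp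
    also have "\<dots> = inv (\<eta> (rpm v (\<xi> u)))"
      unfolding \<eta>_def using that AB \<xi>_Gm by simp
    finally have "inv (rmp (\<eta> v) u) = inv (\<eta> (rpm v (\<xi> u)))" .
    then show ?thesis
      using that \<eta>_Gm \<xi>_Gm by (metis inv_inv ract_mp_closed ract_pm_closed Gm_carrier)
  qed
  moreover have "t (u \<otimes> w) v = t u v * t w (rpm v (\<xi> u))"
    if "u \<in> Gp" "v \<in> Gp" "w \<in> Gp" for u v w
    using D_t[OF that(1,3,2)] B that by simp
  moreover have "t u (w \<otimes> v) = t u v * t (lmp (\<eta> v) u) w"
    if "u \<in> Gp" "v \<in> Gp" "w \<in> Gp" for u v w
    using E_t[OF that(1,3,2)] rpm_A that by simp
  ultimately show ?thesis
    using coproduct_conditions_homs[OF AB D E] t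
    unfolding admissible_data_def \<xi>_def[abs_def] \<eta>_def[abs_def] by blast
qed


section \<open>Positive elements with positive inverse\<close>

lemma mult2_term_le:
  assumes P: "positive2 P" and Q: "positive2 Q"
    and carr: "g1 \<in> carrier G" "g2 \<in> carrier G" "h1 \<in> carrier G" "h2 \<in> carrier G"
  shows "P g1 g2 * Q h1 h2 * hmc G Gp Gm g1 h1 a * hmc G Gp Gm g2 h2 b \<le> mult2 G Gp Gm P Q a b"
proof -
  define F where "F = (\<lambda>(g1, g2, h1, h2).
    P g1 g2 * Q h1 h2 * hmc G Gp Gm g1 h1 a * hmc G Gp Gm g2 h2 b)"
  have "F (g1, g2, h1, h2) \<le> sum F (carrier G \<times> carrier G \<times> carrier G \<times> carrier G)"
    using P Q carr finite_carrier unfolding F_def positive2_def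
    by (intro member_le_sum) (auto simp: hmc_def)
  then show ?thesis
    unfolding mult2_def F_def by (simp add: sum.cartesian_product)
qed

lemma mult2_nonzeroE:
  assumes "mult2 G Gp Gm P Q a b \<noteq> 0"
  obtains g1 g2 h1 h2
  where "g1 \<in> carrier G" "g2 \<in> carrier G" "h1 \<in> carrier G" "h2 \<in> carrier G"
    and "P g1 g2 \<noteq> 0" "Q h1 h2 \<noteq> 0" "hmc G Gp Gm g1 h1 a \<noteq> 0" "hmc G Gp Gm g2 h2 b \<noteq> 0"
proof -
  define F where "F = (\<lambda>(g1, g2, h1, h2).
    P g1 g2 * Q h1 h2 * hmc G Gp Gm g1 h1 a * hmc G Gp Gm g2 h2 b)"
  have "sum F (carrier G \<times> carrier G \<times> carrier G \<times> carrier G) \<noteq> 0"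
    using assms unfolding mult2_def F_def by (simp add: sum.cartesian_product)
  then obtain p where "p \<in> carrier G \<times> carrier G \<times> carrier G \<times> carrier G" "F p \<noteq> 0"
    using sum.not_neutral_contains_not_neutral by blast
  then show ?thesis
    using that unfolding F_def by auto
qed

text \<open>
  Since P and Q are positive, nothing cancels in P Q = 1, so a nonzero product of basis
  tensors from their supports lies in G+ x G+, the support of 1.
\<close>

lemma composable_support_inverse:
  assumes P: "positive2 P" and Q: "positive2 Q" and PQ: "mult2 G Gp Gm P Q = one2 Gp"
    and carr: "g1 \<in> carrier G" "g2 \<in> carrier G" "h1 \<in> carrier G" "h2 \<in> carrier G"
    and nz: "P g1 g2 \<noteq> 0" "Q h1 h2 \<noteq> 0"
    and comp: "bp g1 = fp h1" "bp g2 = fp h2"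
  shows "fm h1 = inv (fm g1)" and "fm h2 = inv (fm g2)"
proof -
  have "0 < P g1 g2 * Q h1 h2"
    using P Q nz unfolding positive2_def by (simp add: less_le)
  also have "\<dots> \<le> mult2 G Gp Gm P Q (g1 \<otimes> fm h1) (g2 \<otimes> fm h2)"
    using mult2_term_le[OF P Q carr, of "g1 \<otimes> fm h1" "g2 \<otimes> fm h2"] carr comp
    by (simp add: hmc_eq)
  finally have "0 < mult2 G Gp Gm P Q (g1 \<otimes> fm h1) (g2 \<otimes> fm h2)" .
  then have "g1 \<otimes> fm h1 \<in> Gp" "g2 \<otimes> fm h2 \<in> Gp"
    using PQ unfolding one2_def by (auto split: if_splits)
  then have "fm (g1 \<otimes> fm h1) = \<one>" "fm (g2 \<otimes> fm h2) = \<one>"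
    by simp_all
  then have "fm g1 \<otimes> fm h1 = \<one>" "fm g2 \<otimes> fm h2 = \<one>"
    using carr by simp_all
  then show "fm h1 = inv (fm g1)" "fm h2 = inv (fm g2)"
    using carr by (simp_all add: inv_equality[symmetric] inv_comm)
qed

lemma bplus_mult_inv_fminus: "g \<in> carrier G \<Longrightarrow> bp (bp g \<otimes> inv (fm g)) = fp g"
proof -
  assume g: "g \<in> carrier G"
  have "bm g \<otimes> bp g = fp g \<otimes> fm g"
    using bminus_bplus[OF g] fplus_fminus[OF g] by simp
  then have "bp g \<otimes> inv (fm g) = inv (bm g) \<otimes> fp g"
    using mult_eq_mult_rearrange(1) g by simp
  then show ?thesis using g by simp
qed


lemma invertible_support_fibre_unique:
  assumes R: "R \<in> tens2 G" "positive2 R" and S: "positive2 S"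
    and RS: "mult2 G Gp Gm R S = one2 Gp" and SR: "mult2 G Gp Gm S R = one2 Gp"
    and xy: "x \<in> Gp" "y \<in> Gp"
  shows "\<exists>!p. R (fst p) (snd p) \<noteq> 0 \<and> fp (fst p) = x \<and> fp (snd p) = y"
proof -
  have "mult2 G Gp Gm R S x y \<noteq> 0"
    using RS xy unfolding one2_def by simp
  then obtain g1 g2 h1 h2
    where carr: "g1 \<in> carrier G" "g2 \<in> carrier G" "h1 \<in> carrier G" "h2 \<in> carrier G"
      and nz: "R g1 g2 \<noteq> 0" "S h1 h2 \<noteq> 0"
      and k: "hmc G Gp Gm g1 h1 x \<noteq> 0" "hmc G Gp Gm g2 h2 y \<noteq> 0"
    by (rule mult2_nonzeroE)
  have k1: "bp g1 = fp h1" "x = g1 \<otimes> fm h1" and k2: "bp g2 = fp h2" "y = g2 \<otimes> fm h2"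
    using k carr by (auto simp: hmc_eq split: if_splits)
  have "fp x = fp g1" "fp y = fp g2"
    using k1(2) k2(2) carr by simp_all
  then have fp_g: "fp g1 = x" "fp g2 = y"
    using xy by simp_all
  have inv_fm: "fm h1 = inv (fm g1)" "fm h2 = inv (fm g2)"
    using composable_support_inverse[OF R(2) S RS carr nz k1(1) k2(1)] by simp_all
  have bp_h: "bp h1 = x" "bp h2 = y"
  proof -
    have "h1 = bp g1 \<otimes> inv (fm g1)" "h2 = bp g2 \<otimes> inv (fm g2)"
      by (simp_all only: k1(1) k2(1) inv_fm[symmetric] fplus_fminus carr)
    then show "bp h1 = x" "bp h2 = y"
      using bplus_mult_inv_fminus carr fp_g by simp_all
  qed
  have unique: "g1' = g1 \<and> g2' = g2" if "R g1' g2' \<noteq> 0" "fp g1' = x" "fp g2' = y" for g1' g2'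
  proof -
    have carr': "g1' \<in> carrier G" "g2' \<in> carrier G"
      using R(1) that(1) unfolding tens2_def by auto
    have "fm g1' = inv (fm h1)" "fm g2' = inv (fm h2)"
      using composable_support_inverse[OF S R(2) SR carr(3,4) carr' nz(2) that(1)] bp_h that
      by simp_all
    then have "fm g1' = fm g1" "fm g2' = fm g2"
      using inv_fm carr by simp_all
    then show ?thesis
      using factor_eqI[OF carr'(1) carr(1)] factor_eqI[OF carr'(2) carr(2)] that fp_g by simp
  qed
  show ?thesis
  proof (rule ex1I[of _ "(g1, g2)"])
    show "R (fst (g1, g2)) (snd (g1, g2)) \<noteq> 0 \<and> fp (fst (g1, g2)) = x \<and> fp (snd (g1, g2)) = y"
      using nz(1) fp_g by simp
    fix p assume "R (fst p) (snd p) \<noteq> 0 \<and> fp (fst p) = x \<and> fp (snd p) = y"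
    then show "p = (g1, g2)"
      using unique[of "fst p" "snd p"] by (simp add: prod_eq_iff)
  qed
qed

lemma monomial2_of_unique_support:
  assumes R: "R \<in> tens2 G" "positive2 R"
    and unique: "\<And>x y. x \<in> Gp \<Longrightarrow> y \<in> Gp \<Longrightarrow>
      \<exists>!p. R (fst p) (snd p) \<noteq> 0 \<and> fp (fst p) = x \<and> fp (snd p) = y"
  obtains t A B
  where "\<And>u v. u \<in> Gp \<Longrightarrow> v \<in> Gp \<Longrightarrow> A u v \<in> Gm \<and> B u v \<in> Gm"
    and "\<And>u v. u \<in> Gp \<Longrightarrow> v \<in> Gp \<Longrightarrow> t u v > 0"
    and "R = monomial2 t A B"
proof -
  define P where "P x y = (THE p. R (fst p) (snd p) \<noteq> 0 \<and> fp (fst p) = x \<and> fp (snd p) = y)"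
    for x y
  define t where "t x y = R (fst (P x y)) (snd (P x y))" for x y
  define A where "A x y = fm (fst (P x y))" for x y
  define B where "B x y = fm (snd (P x y))" for x y
  have supp: "a \<in> carrier G \<and> b \<in> carrier G" if "R a b \<noteq> 0" for a b
    using R(1) that unfolding tens2_def by blast
  have P: "R (fst (P x y)) (snd (P x y)) \<noteq> 0" "fp (fst (P x y)) = x" "fp (snd (P x y)) = y"
    if "x \<in> Gp" "y \<in> Gp" for x y
    using theI'[OF unique[OF that]] unfolding P_def by simp_all
  have P_eq: "P (fp a) (fp b) = (a, b)" if "R a b \<noteq> 0" for a b
    unfolding P_def using unique[of "fp a" "fp b"] supp[OF that] that by (intro the1_equality) simp_all
  have AB: "A u v \<in> Gm \<and> B u v \<in> Gm" and t: "t u v > 0" if "u \<in> Gp" "v \<in> Gp" for u v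
    using P[OF that] supp R(2) unfolding A_def B_def t_def positive2_def
    by (auto simp: less_le)
  have "R a b = monomial2 t A B a b" for a b
  proof (cases "a \<in> carrier G \<and> b \<in> carrier G \<and> fm a = A (fp a) (fp b) \<and> fm b = B (fp a) (fp b)")
    case True
    obtain a' b' where ab': "P (fp a) (fp b) = (a', b')"
      by (cases "P (fp a) (fp b)")
    then have R': "R a' b' \<noteq> 0" "fp a' = fp a" "fp b' = fp b"
      using P[of "fp a" "fp b"] True by simp_all
    have "a' = a" "b' = b"
      using supp[OF R'(1)] True ab' R' by (simp_all add: factor_eqI A_def B_def)
    then show ?thesis
      using True ab' unfolding monomial2_def t_def by simp
  next
    case False
    have "R a b = 0"
    proof (rule ccontr)
      assume nz: "R a b \<noteq> 0"
      show False
        using P_eq[OF nz] supp[OF nz] False unfolding A_def B_def by simp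
    qed
    then show ?thesis
      using False unfolding monomial2_def by auto
  qed
  then show ?thesis
    using that AB t by blast
qed


lemma R_of_coproduct_identities:
  assumes adm: "admissible_data G Gp Gm \<xi> \<eta> r"
  shows "delta_id G Gp Gm (R_of G Gp Gm \<xi> \<eta> r) =
      mult3 G Gp Gm (leg13 Gp (R_of G Gp Gm \<xi> \<eta> r)) (leg23 Gp (R_of G Gp Gm \<xi> \<eta> r)) \<and>
    id_delta G Gp Gm (R_of G Gp Gm \<xi> \<eta> r) =
      mult3 G Gp Gm (leg13 Gp (R_of G Gp Gm \<xi> \<eta> r)) (leg12 Gp (R_of G Gp Gm \<xi> \<eta> r))"
proof -
  define A where "A = (\<lambda>u v. inv (rmp (\<eta> v) u))"
  define B where "B = (\<lambda>u v :: 'a. \<xi> u)"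
  have \<xi>: "\<And>u. u \<in> Gp \<Longrightarrow> \<xi> u \<in> Gm" and \<eta>: "\<And>u. u \<in> Gp \<Longrightarrow> \<eta> u \<in> Gm"
    and r: "\<And>u v. u \<in> Gp \<Longrightarrow> v \<in> Gp \<Longrightarrow> r u v \<noteq> 0"
    using adm unfolding admissible_data_def hom_Gp_Gm_iff by (auto simp: less_le)
  have AB: "A u v \<in> Gm \<and> B u v \<in> Gm" if "u \<in> Gp" "v \<in> Gp" for u v
    unfolding A_def B_def using \<xi> \<eta> that by simp
  have R: "R_of G Gp Gm \<xi> \<eta> r = monomial2 r A B"
    unfolding A_def B_def using \<xi> \<eta> by (rule R_of_eq_monomial2)
  have "delta_id_conditions r A B" "id_delta_conditions r A B"
    unfolding A_def B_def by (rule admissible_data_imp_coproduct_conditions[OF adm])+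
  then show ?thesis
    unfolding R using delta_id_monomial2_iff[of A B r, OF AB r] id_delta_monomial2_iff[of A B r, OF AB r]
    by blast
qed

lemma coproduct_identities_imp_R_of:
  assumes R: "R \<in> tens2 G" "positive2 R" and S: "positive2 S"
    and RS: "mult2 G Gp Gm R S = one2 Gp" and SR: "mult2 G Gp Gm S R = one2 Gp"
    and delta_id: "delta_id G Gp Gm R = mult3 G Gp Gm (leg13 Gp R) (leg23 Gp R)"
    and id_delta: "id_delta G Gp Gm R = mult3 G Gp Gm (leg13 Gp R) (leg12 Gp R)"
  shows "\<exists>\<xi> \<eta> r. admissible_data G Gp Gm \<xi> \<eta> r \<and> R = R_of G Gp Gm \<xi> \<eta> r"
proof -
  obtain t A B where AB: "\<And>u v. u \<in> Gp \<Longrightarrow> v \<in> Gp \<Longrightarrow> A u v \<in> Gm \<and> B u v \<in> Gm"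
    and t: "\<And>u v. u \<in> Gp \<Longrightarrow> v \<in> Gp \<Longrightarrow> t u v > 0" and R_eq: "R = monomial2 t A B"
    using monomial2_of_unique_support[OF R invertible_support_fibre_unique[OF R S RS SR]] by blast
  have t_nz: "\<And>u v. u \<in> Gp \<Longrightarrow> v \<in> Gp \<Longrightarrow> t u v \<noteq> 0"
    using t by (simp add: less_le)
  have D: "delta_id_conditions t A B" and E: "id_delta_conditions t A B"
    using delta_id id_delta delta_id_monomial2_iff[of A B t, OF AB t_nz]
      id_delta_monomial2_iff[of A B t, OF AB t_nz]
    unfolding R_eq by blast+
  define \<xi> where "\<xi> u = B u \<one>" for u
  define \<eta> where "\<eta> v = inv (A \<one> v)" for v
  have "admissible_data G Gp Gm \<xi> \<eta> t"
    unfolding \<xi>_def[abs_def] \<eta>_def[abs_def] using AB t D E by (rule coproduct_conditions_imp_admissible_data)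
  moreover have "R = R_of G Gp Gm \<xi> \<eta> t"
  proof -
    have "\<xi> u \<in> Gm" "\<eta> u \<in> Gm" if "u \<in> Gp" for u
      unfolding \<xi>_def \<eta>_def using AB that by simp_all
    then have "R_of G Gp Gm \<xi> \<eta> t = monomial2 t (\<lambda>u v. inv (rmp (\<eta> v) u)) (\<lambda>u v. \<xi> u)"
      by (intro R_of_eq_monomial2)
    also have "\<dots> = R"
      unfolding R_eq \<xi>_def \<eta>_def using coproduct_conditions_normal_form[OF AB D E] by (intro monomial2_cong) metis
    finally show ?thesis ..
  qed
  ultimately show ?thesis by blast
qed

end

theorem proposition3:
  fixes G :: "'a monoid" and Gp Gm :: "'a set"
  assumes "unique_factorization G Gp Gm"
  shows "(\<forall>\<xi> \<eta> r. admissible_data G Gp Gm \<xi> \<eta> r \<longrightarrow>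
            (let R = R_of G Gp Gm \<xi> \<eta> r in
               delta_id G Gp Gm R = mult3 G Gp Gm (leg13 Gp R) (leg23 Gp R) \<and>
               id_delta G Gp Gm R = mult3 G Gp Gm (leg13 Gp R) (leg12 Gp R)))
       \<and> (\<forall>R \<in> tens2 G.
            (positive2 R \<and>
             (\<exists>S \<in> tens2 G. mult2 G Gp Gm R S = one2 Gp \<and> mult2 G Gp Gm S R = one2 Gp \<and> positive2 S) \<and>
             delta_id G Gp Gm R = mult3 G Gp Gm (leg13 Gp R) (leg23 Gp R) \<and>
             id_delta G Gp Gm R = mult3 G Gp Gm (leg13 Gp R) (leg12 Gp R))
            \<longrightarrow> (\<exists>\<xi> \<eta> r. admissible_data G Gp Gm \<xi> \<eta> r \<and> R = R_of G Gp Gm \<xi> \<eta> r))"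
proof -
  interpret factorized_group G Gp Gm
    by (rule factorized_group.intro) (rule assms)
  show ?thesis
    unfolding Let_def
    using R_of_coproduct_identities coproduct_identities_imp_R_of by blast
qed

end
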